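(* Let $g:\{\pm1\}^{m_1}\times\{\pm1\}^{m_2}\to\{\pm1\}$ be a gadget with $\hat g(S,T)=0$ whenever $S=\emptyset$ or $T=\emptyset$. Then for all $k,d,n$, $$L_{1,k}(g,d,m_1,m_2,n)\le\Bigl(\sum_{S,T}|\hat g(S,T)|\Bigr)^{k}L_{1,k}(\mathrm{XOR},d,1,1,n)\le 2^{(m_1+m_2)k/2}L_{1,k}(\mathrm{XOR},d,1,1,n).$$
   Context: $\hat g(S,T)=\mathbb{E}[g(\mathbf{x},\mathbf{y})\prod_{j\in S}\mathbf{x}_j\prod_{j\in T}\mathbf{y}_j]$ for uniform $\mathbf{x}\in\{\pm1\}^{m_1},\mathbf{y}\in\{\pm1\}^{m_2}$, and the sum is over all $S\subseteq[m_1],T\subseteq[m_2]$. For a randomized two-party protocol $\mathcal{C}:(\{\pm1\}^{m_1})^n\times(\{\pm1\}^{m_2})^n\to[-1,1]$ (value = expected output over internal randomness; inputs are $n$ blocks $x_i\in\{\pm1\}^{m_1}$, $y_i\in\{\pm1\}^{m_2}$), its $g$-fiber is $\mathcal{C}_{\downarrow g}(z)=\mathbb{E}[\mathcal{C}(\mathbf{x},\mathbf{y})\mid g(\mathbf{x}_i,\mathbf{y}_i)=z_i\ \forall i]$ for uniform $\mathbf{x},\mathbf{y}$. For $f:\{\pm1\}^n\to\mathbb{R}$, $L_{1,k}(f)=\sum_{|I|=k}|\hat f(I)|$. $L_{1,k}(g,d,m_1,m_2,n)$ denotes the supremum of $L_{1,k}(\mathcal{C}_{\downarrow g})$ over all such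 randomized protocols with at most $d$ bits of communication. $\mathrm{XOR}:\{\pm1\}\times\{\pm1\}\to\{\pm1\}$ is the gadget $\mathrm{XOR}(a,b)=ab$ (so $m_1=m_2=1$). *)

theory Defs
  imports "HOL-Probability.Probability"
begin

definition cube :: "nat \<Rightarrow> (nat \<Rightarrow> real) set" where
  "cube m = ({..<m} \<rightarrow>\<^sub>E {-1, 1})"

definition ghat :: "((nat \<Rightarrow> real) \<Rightarrow> (nat \<Rightarrow> real) \<Rightarrow> real) \<Rightarrow> nat \<Rightarrow> nat
    \<Rightarrow> nat set \<Rightarrow> nat set \<Rightarrow> real" where
  "ghat g m1 m2 S T = (\<Sum>x\<in>cube m1. \<Sum>y\<in>cube m2.
      g x y * (\<Prod>j\<in>S. x j) * (\<Prod>j\<in>T. y j)) / 2 ^ (m1 + m2)"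

definition fhat :: "((nat \<Rightarrow> real) \<Rightarrow> real) \<Rightarrow> nat \<Rightarrow> nat set \<Rightarrow> real" where
  "fhat f n I = (\<Sum>z\<in>cube n. f z * (\<Prod>i\<in>I. z i)) / 2 ^ n"

definition L1k :: "((nat \<Rightarrow> real) \<Rightarrow> real) \<Rightarrow> nat \<Rightarrow> nat \<Rightarrow> real" where
  "L1k f n k = (\<Sum>I\<in>{I. I \<subseteq> {..<n} \<and> card I = k}. \<bar>fhat f n I\<bar>)"

text \<open>Deterministic two-party protocol trees: Alice's nodes branch on a predicate
  of her input, Bob's nodes on a predicate of his; leaves carry the output.\<close>
datatype ('a, 'b) proto =
    Leaf real
  | ANode "'a \<Rightarrow> bool" "('a, 'b) proto" "('a, 'b) proto"
  | BNode "'b \<Rightarrow> bool" "('a, 'b) proto" "('a, 'b) proto"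

fun eval_proto :: "('a, 'b) proto \<Rightarrow> 'a \<Rightarrow> 'b \<Rightarrow> real" where
  "eval_proto (Leaf v) x y = v"
| "eval_proto (ANode p l r) x y = (if p x then eval_proto l x y else eval_proto r x y)"
| "eval_proto (BNode p l r) x y = (if p y then eval_proto l x y else eval_proto r x y)"

fun cost :: "('a, 'b) proto \<Rightarrow> nat" where
  "cost (Leaf v) = 0"
| "cost (ANode p l r) = Suc (max (cost l) (cost r))"
| "cost (BNode p l r) = Suc (max (cost l) (cost r))"

fun outputs_bounded :: "('a, 'b) proto \<Rightarrow> bool" where
  "outputs_bounded (Leaf v) = (\<bar>v\<bar> \<le> 1)"
| "outputs_bounded (ANode p l r) = (outputs_bounded l \<and> outputs_bounded r)"
| "outputs_bounded (BNode p l r) = (outputs_bounded l \<and> outputs_bounded r)"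

type_synonym input = "nat \<Rightarrow> nat \<Rightarrow> real"  \<comment> \<open>n blocks, block i is a point of a cube\<close>

text \<open>A randomized protocol with at most d bits of communication: a probability
  distribution over deterministic protocols (fixing all random coins) of cost at most d
  with outputs in [-1,1]; its value is the expected output.\<close>
definition rand_protocols :: "nat \<Rightarrow> (input, input) proto pmf set" where
  "rand_protocols d = {p. \<forall>P\<in>set_pmf p. cost P \<le> d \<and> outputs_bounded P}"

definition rvalue :: "(input, input) proto pmf \<Rightarrow> input \<Rightarrow> input \<Rightarrow> real" where
  "rvalue p X Y = measure_pmf.expectation p (\<lambda>P. eval_proto P X Y)"

definition fiber :: "((nat \<Rightarrow> real) \<Rightarrow> (nat \<Rightarrow> real) \<Rightarrow> real) \<Rightarrow> nat \<Rightarrow> nat \<Rightarrow> nat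
    \<Rightarrow> (input \<Rightarrow> input \<Rightarrow> real) \<Rightarrow> (nat \<Rightarrow> real) \<Rightarrow> real" where
  "fiber g m1 m2 n C z =
     (let A = {(X, Y). X \<in> {..<n} \<rightarrow>\<^sub>E cube m1 \<and> Y \<in> {..<n} \<rightarrow>\<^sub>E cube m2
                     \<and> (\<forall>i<n. g (X i) (Y i) = z i)}
      in (\<Sum>(X, Y)\<in>A. C X Y) / card A)"

definition L1k_gadget :: "((nat \<Rightarrow> real) \<Rightarrow> (nat \<Rightarrow> real) \<Rightarrow> real) \<Rightarrow> nat \<Rightarrow> nat \<Rightarrow> nat
    \<Rightarrow> nat \<Rightarrow> nat \<Rightarrow> real" where
  "L1k_gadget g d m1 m2 n k =
     (SUP p\<in>rand_protocols d. L1k (fiber g m1 m2 n (rvalue p)) n k)"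

definition XOR :: "(nat \<Rightarrow> real) \<Rightarrow> (nat \<Rightarrow> real) \<Rightarrow> real" where
  "XOR a b = a 0 * b 0"

end

theory Submission
  imports Defs
begin

(* Fourier inversion writes g(x_i, y_i) as a sum of ghat(S,T) chi_S(x_i) chi_T(y_i). Expanding the
   product over a level-k set I and normalising by W = sum |ghat(S,T)| turns each level-k Fourier
   coefficient of the g-fiber into W^k times a convex combination, over choices psi of one pair
   (S_j, T_j) per block, of correlations E[C(X,Y) prod_{i in I} chi_{S_i}(X_i) chi_{T_i}(Y_i)],
   with weights that do not depend on I. Since ghat vanishes when S or T is empty, every S_j and
   T_j is nonempty, so adjusting the pivot coordinate Min S_j of a uniform block plants a uniform
   bit a_j as chi_{S_j}(X_j). Each correlation is therefore an average, over the remaining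
   coordinates, of Fourier coefficients of XOR-fibers of the protocol run on planted inputs, which
   has the same cost; hence their level-k L1 norms are at most L_{1,k}(XOR). Balancedness
   (ghat(empty, empty) = 0) makes all fibers equally large, so Fourier coefficients of fibers are
   plain averages over inputs. Finally W <= 2^((m1+m2)/2) by Cauchy-Schwarz and Parseval. *)

lemma sum_swap_double:
  "(\<Sum>a\<in>A. \<Sum>b\<in>B. \<Sum>c\<in>C. \<Sum>d\<in>D. f a b c d) = (\<Sum>c\<in>C. \<Sum>d\<in>D. \<Sum>a\<in>A. \<Sum>b\<in>B. f a b c d)"
proof -
  have "(\<Sum>a\<in>A. \<Sum>b\<in>B. \<Sum>c\<in>C. \<Sum>d\<in>D. f a b c d) = (\<Sum>a\<in>A. \<Sum>c\<in>C. \<Sum>b\<in>B. \<Sum>d\<in>D. f a b c d)"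
    by (rule sum.cong[OF refl], rule sum.swap)
  also have "\<dots> = (\<Sum>a\<in>A. \<Sum>c\<in>C. \<Sum>d\<in>D. \<Sum>b\<in>B. f a b c d)"
    by (rule sum.cong[OF refl], rule sum.cong[OF refl], rule sum.swap)
  also have "\<dots> = (\<Sum>c\<in>C. \<Sum>a\<in>A. \<Sum>d\<in>D. \<Sum>b\<in>B. f a b c d)"
    by (rule sum.swap)
  also have "\<dots> = (\<Sum>c\<in>C. \<Sum>d\<in>D. \<Sum>a\<in>A. \<Sum>b\<in>B. f a b c d)"
    by (rule sum.cong[OF refl], rule sum.swap)
  finally show ?thesis .
qed

lemma prod_in_pm1:
  assumes "\<And>i. i \<in> A \<Longrightarrow> f i \<in> {-1, 1::real}"
  shows "prod f A \<in> {-1, 1}"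
proof -
  have "prod f A * prod f A = (\<Prod>i\<in>A. f i * f i)" by (simp add: prod.distrib)
  also have "\<dots> = 1"
  proof (rule prod.neutral)
    show "\<forall>i\<in>A. f i * f i = 1" using assms by fastforce
  qed
  finally show ?thesis using square_eq_1_iff[of "prod f A"] by auto
qed

lemma mult_in_pm1: "a \<in> {-1, 1} \<Longrightarrow> b \<in> {-1, 1} \<Longrightarrow> a * b \<in> {-1, 1::real}"
  by auto

lemma sum_abs_convex_combination_le:
  fixes \<mu> :: "'a \<Rightarrow> real"
  assumes nonneg: "\<And>a. a \<in> A \<Longrightarrow> 0 \<le> \<mu> a" and total: "sum \<mu> A = 1"
    and bound: "\<And>a. a \<in> A \<Longrightarrow> (\<Sum>I\<in>J. \<bar>c a I\<bar>) \<le> L"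
  shows "(\<Sum>I\<in>J. \<bar>\<Sum>a\<in>A. \<mu> a * c a I\<bar>) \<le> L"
proof -
  have "(\<Sum>I\<in>J. \<bar>\<Sum>a\<in>A. \<mu> a * c a I\<bar>) \<le> (\<Sum>I\<in>J. \<Sum>a\<in>A. \<mu> a * \<bar>c a I\<bar>)"
    by (intro sum_mono order_trans[OF sum_abs]) (simp add: abs_mult nonneg)
  also have "\<dots> = (\<Sum>a\<in>A. \<mu> a * (\<Sum>I\<in>J. \<bar>c a I\<bar>))"
    by (simp add: sum_distrib_left sum.swap[of _ J])
  also have "\<dots> \<le> (\<Sum>a\<in>A. \<mu> a * L)"
    by (intro sum_mono mult_left_mono bound nonneg)
  also have "\<dots> = L"
    by (simp add: sum_distrib_right[symmetric] total)
  finally show ?thesis .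
qed

(* Indices outside I contribute the factor (sum |w u|) / W = 1, which makes the weights of the
   resulting convex combination independent of I. *)
lemma prod_sum_normalized_expansion:
  fixes w :: "'u \<Rightarrow> real" and F :: "nat \<Rightarrow> 'u \<Rightarrow> real"
  assumes U: "finite U" and W: "W = (\<Sum>u\<in>U. \<bar>w u\<bar>)" "0 < W" and I: "I \<subseteq> {..<n}"
  shows "(\<Prod>i\<in>I. \<Sum>u\<in>U. w u * F i u)
       = W ^ card I * (\<Sum>\<psi>\<in>PiE {..<n} (\<lambda>_. U).
           (\<Prod>j<n. \<bar>w (\<psi> j)\<bar> / W) * (\<Prod>i\<in>I. sgn (w (\<psi> i)) * F i (\<psi> i)))"
proof -
  define h where "h j u = \<bar>w u\<bar> / W * (if j \<in> I then W * (sgn (w u) * F j u) else 1)" for j u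
  have "(\<Prod>i\<in>I. \<Sum>u\<in>U. w u * F i u) = (\<Prod>j<n. if j \<in> I then \<Sum>u\<in>U. w u * F j u else 1)"
    using I by (simp add: prod.inter_restrict[symmetric] Int_absorb1)
  also have "\<dots> = (\<Prod>j<n. \<Sum>u\<in>U. h j u)"
  proof (intro prod.cong refl)
    fix j
    have "\<bar>w u\<bar> / W * (W * (sgn (w u) * F j u)) = w u * F j u" for u
      using W(2) by (simp add: abs_mult_sgn mult.assoc[symmetric])
    moreover have "(\<Sum>u\<in>U. \<bar>w u\<bar> / W) = 1"
      using W by (simp add: sum_divide_distrib[symmetric])
    ultimately show "(if j \<in> I then \<Sum>u\<in>U. w u * F j u else 1) = (\<Sum>u\<in>U. h j u)"
      by (simp add: h_def)
  qed
  also have "\<dots> = (\<Sum>\<psi>\<in>PiE {..<n} (\<lambda>_. U). \<Prod>j<n. h j (\<psi> j))"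
    using U by (simp add: prod_sum_PiE)
  also have "\<dots> = (\<Sum>\<psi>\<in>PiE {..<n} (\<lambda>_. U).
      W ^ card I * ((\<Prod>j<n. \<bar>w (\<psi> j)\<bar> / W) * (\<Prod>i\<in>I. sgn (w (\<psi> i)) * F i (\<psi> i))))"
  proof (intro sum.cong refl)
    fix \<psi>
    show "(\<Prod>j<n. h j (\<psi> j))
        = W ^ card I * ((\<Prod>j<n. \<bar>w (\<psi> j)\<bar> / W) * (\<Prod>i\<in>I. sgn (w (\<psi> i)) * F i (\<psi> i)))"
      unfolding h_def prod.distrib using I
      by (simp add: prod.inter_restrict[symmetric] Int_absorb1 prod.distrib)
  qed
  finally show ?thesis by (simp add: sum_distrib_left)
qed

section \<open>Fourier analysis on the cube\<close>

lemma mem_cube_iff: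
  "x \<in> cube m \<longleftrightarrow> (\<forall>j<m. x j = -1 \<or> x j = 1) \<and> (\<forall>j. \<not> j < m \<longrightarrow> x j = undefined)"
  unfolding cube_def PiE_iff extensional_def by auto

lemma finite_cube [simp]: "finite (cube m)"
  unfolding cube_def by (auto intro!: finite_PiE)

lemma card_cube: "card (cube m) = 2 ^ m"
  unfolding cube_def by (simp add: card_PiE numeral_2_eq_2)

lemma cube_nonempty: "cube m \<noteq> {}"
proof -
  have "(\<lambda>j\<in>{..<m}. 1) \<in> cube m" by (auto simp: mem_cube_iff)
  then show ?thesis by blast
qed

definition chi :: "(nat \<Rightarrow> real) \<Rightarrow> nat set \<Rightarrow> real" where
  "chi x S = (\<Prod>j\<in>S. x j)"

lemma chi_in_pm1: "x \<in> cube m \<Longrightarrow> S \<subseteq> {..<m} \<Longrightarrow> chi x S \<in> {-1, 1}"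
  unfolding chi_def by (rule prod_in_pm1) (auto simp: mem_cube_iff)

lemma sum_chi_mult_chi:
  assumes x: "x \<in> cube m" and x': "x' \<in> cube m"
  shows "(\<Sum>S\<in>Pow {..<m}. chi x S * chi x' S) = (if x = x' then 2 ^ m else 0)"
proof -
  have "(\<Sum>S\<in>Pow {..<m}. chi x S * chi x' S) = (\<Prod>j<m. x j * x' j + 1)"
    using prod_add[of "{..<m}" "\<lambda>j. x j * x' j" "\<lambda>_. 1"] by (simp add: chi_def prod.distrib)
  also have "\<dots> = (if x = x' then 2 ^ m else 0)"
  proof (cases "x = x'")
    case True
    then have "(\<Prod>j<m. x j * x' j + 1) = (\<Prod>j<m. 2::real)"
      using x by (intro prod.cong) (auto simp: mem_cube_iff)
    then show ?thesis using True by simp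
  next
    case False
    then obtain j where j: "x j \<noteq> x' j" by auto
    with x x' have "j < m" by (metis mem_cube_iff)
    with x x' have "x j \<in> {-1, 1}" "x' j \<in> {-1, 1}" by (auto simp: mem_cube_iff)
    with j have "x j * x' j + 1 = 0" by auto
    with \<open>j < m\<close> have "(\<Prod>j<m. x j * x' j + 1) = 0" by (intro prod_zero) auto
    then show ?thesis using False by simp
  qed
  finally show ?thesis .
qed

lemma sum_cube_chi:
  assumes "S \<subseteq> {..<m}"
  shows "(\<Sum>x\<in>cube m. chi x S) = (if S = {} then 2 ^ m else 0)"
proof -
  have "(\<Sum>x\<in>cube m. chi x S) = (\<Sum>x\<in>cube m. \<Prod>j<m. if j \<in> S then x j else 1)"
    using assms by (intro sum.cong refl) (simp add: chi_def prod.If_cases Int_absorb1)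
  also have "\<dots> = (\<Prod>j<m. \<Sum>c\<in>{-1, 1}. if j \<in> S then c else 1)"
    unfolding cube_def by (rule prod_sum_PiE[symmetric]) auto
  also have "\<dots> = (\<Prod>j<m. if j \<in> S then 0 else 2)"
    by (intro prod.cong) auto
  also have "\<dots> = (if S = {} then 2 ^ m else 0)"
    using assms by (auto simp: prod_zero_iff)
  finally show ?thesis .
qed

lemma ghat_inversion:
  assumes x: "x \<in> cube m1" and y: "y \<in> cube m2"
  shows "g x y = (\<Sum>S\<in>Pow {..<m1}. \<Sum>T\<in>Pow {..<m2}. ghat g m1 m2 S T * chi x S * chi y T)"
proof -
  let ?N = "(2::real) ^ (m1 + m2)"
  have "(\<Sum>S\<in>Pow {..<m1}. \<Sum>T\<in>Pow {..<m2}. ghat g m1 m2 S T * chi x S * chi y T)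
     = (\<Sum>S\<in>Pow {..<m1}. \<Sum>T\<in>Pow {..<m2}. \<Sum>x'\<in>cube m1. \<Sum>y'\<in>cube m2.
          g x' y' * (chi x' S * chi x S) * (chi y' T * chi y T) / ?N)"
    unfolding ghat_def chi_def[symmetric] sum_divide_distrib sum_distrib_right
    by (intro sum.cong refl) (simp add: mult_ac)
  also have "\<dots> = (\<Sum>x'\<in>cube m1. \<Sum>y'\<in>cube m2. \<Sum>S\<in>Pow {..<m1}. \<Sum>T\<in>Pow {..<m2}.
          g x' y' * (chi x' S * chi x S) * (chi y' T * chi y T) / ?N)"
    by (rule sum_swap_double)
  also have "\<dots> = (\<Sum>x'\<in>cube m1. \<Sum>y'\<in>cube m2.
          g x' y' * (\<Sum>S\<in>Pow {..<m1}. chi x' S * chi x S) * (\<Sum>T\<in>Pow {..<m2}. chi y' T * chi y T) / ?N)"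
  proof (intro sum.cong refl)
    fix x' y'
    show "(\<Sum>S\<in>Pow {..<m1}. \<Sum>T\<in>Pow {..<m2}. g x' y' * (chi x' S * chi x S) * (chi y' T * chi y T) / ?N)
      = g x' y' * (\<Sum>S\<in>Pow {..<m1}. chi x' S * chi x S) * (\<Sum>T\<in>Pow {..<m2}. chi y' T * chi y T) / ?N"
      unfolding sum_divide_distrib[symmetric] sum_distrib_left sum_distrib_right
      by (simp add: mult_ac) (rule sum.swap)
  qed
  also have "\<dots> = (\<Sum>x'\<in>cube m1. \<Sum>y'\<in>cube m2. if x' = x then if y' = y then g x y else 0 else 0)"
    using x y by (intro sum.cong refl) (auto simp: sum_chi_mult_chi power_add)
  also have "\<dots> = (\<Sum>x'\<in>cube m1. if x' = x then \<Sum>y'\<in>cube m2. if y' = y then g x y else 0 else 0)"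
    by (intro sum.cong refl) auto
  also have "\<dots> = g x y"
    using x y by simp
  finally show ?thesis by simp
qed

lemma parseval:
  "(\<Sum>S\<in>Pow {..<m1}. \<Sum>T\<in>Pow {..<m2}. (ghat g m1 m2 S T)\<^sup>2)
     = (\<Sum>x\<in>cube m1. \<Sum>y\<in>cube m2. (g x y)\<^sup>2) / 2 ^ (m1 + m2)"
proof -
  let ?N = "(2::real) ^ (m1 + m2)"
  have "(\<Sum>S\<in>Pow {..<m1}. \<Sum>T\<in>Pow {..<m2}. (ghat g m1 m2 S T)\<^sup>2)
     = (\<Sum>S\<in>Pow {..<m1}. \<Sum>T\<in>Pow {..<m2}. \<Sum>x\<in>cube m1. \<Sum>y\<in>cube m2.
          g x y * (ghat g m1 m2 S T * chi x S * chi y T) / ?N)"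
  proof (intro sum.cong refl)
    fix S T
    show "(ghat g m1 m2 S T)\<^sup>2 = (\<Sum>x\<in>cube m1. \<Sum>y\<in>cube m2. g x y * (ghat g m1 m2 S T * chi x S * chi y T) / ?N)"
      unfolding power2_eq_square
      by (subst (2) ghat_def) (simp add: chi_def sum_divide_distrib sum_distrib_left mult_ac)
  qed
  also have "\<dots> = (\<Sum>x\<in>cube m1. \<Sum>y\<in>cube m2. \<Sum>S\<in>Pow {..<m1}. \<Sum>T\<in>Pow {..<m2}.
          g x y * (ghat g m1 m2 S T * chi x S * chi y T) / ?N)"
    by (rule sum_swap_double)
  also have "\<dots> = (\<Sum>x\<in>cube m1. \<Sum>y\<in>cube m2. g x y * g x y / ?N)"
    by (intro sum.cong refl)
       (simp add: ghat_inversion[of _ m1 _ m2 g] sum_divide_distrib sum_distrib_left)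
  finally show ?thesis by (simp add: power2_eq_square sum_divide_distrib)
qed

lemma sum_abs_ghat_le:
  assumes gadget: "\<And>x y. x \<in> cube m1 \<Longrightarrow> y \<in> cube m2 \<Longrightarrow> g x y \<in> {-1, 1}"
  shows "(\<Sum>S\<in>Pow {..<m1}. \<Sum>T\<in>Pow {..<m2}. \<bar>ghat g m1 m2 S T\<bar>) \<le> 2 powr (real (m1 + m2) / 2)"
proof -
  let ?U = "Pow {..<m1} \<times> Pow {..<m2}"
  let ?W = "\<Sum>(S, T)\<in>?U. \<bar>ghat g m1 m2 S T\<bar>"
  have "?W\<^sup>2 \<le> (\<Sum>(S, T)\<in>?U. \<bar>ghat g m1 m2 S T\<bar>\<^sup>2) * card ?U"
    using sum_squared_le_sum_of_squares[of "\<lambda>(S, T). \<bar>ghat g m1 m2 S T\<bar>" ?U]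
    by (simp add: case_prod_beta)
  also have "(\<Sum>(S, T)\<in>?U. \<bar>ghat g m1 m2 S T\<bar>\<^sup>2) = (\<Sum>x\<in>cube m1. \<Sum>y\<in>cube m2. (g x y)\<^sup>2) / 2 ^ (m1 + m2)"
    by (simp add: sum.cartesian_product[symmetric] parseval)
  also have "\<dots> = 1"
  proof -
    have "(\<Sum>x\<in>cube m1. \<Sum>y\<in>cube m2. (g x y)\<^sup>2) = (\<Sum>x\<in>cube m1. \<Sum>y\<in>cube m2. 1)"
      using gadget by (intro sum.cong refl) (force simp: power2_eq_square)
    then show ?thesis by (simp add: card_cube power_add)
  qed
  also have "real (card ?U) = 2 ^ (m1 + m2)"
    by (simp add: card_cartesian_product card_Pow power_add)
  finally have "?W \<le> sqrt (2 ^ (m1 + m2))" by (simp add: real_le_rsqrt)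
  also have "\<dots> = 2 powr (real (m1 + m2) / 2)"
    by (subst powr_half_sqrt_powr) (simp_all add: powr_realpow[symmetric])
  finally show ?thesis by (simp add: sum.cartesian_product)
qed

definition fourier_support :: "((nat \<Rightarrow> real) \<Rightarrow> (nat \<Rightarrow> real) \<Rightarrow> real) \<Rightarrow> nat \<Rightarrow> nat
    \<Rightarrow> (nat set \<times> nat set) set" where
  "fourier_support g m1 m2 = {(S, T) \<in> Pow {..<m1} \<times> Pow {..<m2}. ghat g m1 m2 S T \<noteq> 0}"

lemma finite_fourier_support [simp]: "finite (fourier_support g m1 m2)"
proof -
  have "fourier_support g m1 m2 \<subseteq> Pow {..<m1} \<times> Pow {..<m2}" by (auto simp: fourier_support_def)
  then show ?thesis by (rule finite_subset) auto
qed

lemma sum_fourier_support: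
  assumes "\<And>S T. ghat g m1 m2 S T = 0 \<Longrightarrow> f S T = 0"
  shows "(\<Sum>(S, T)\<in>fourier_support g m1 m2. f S T) = (\<Sum>S\<in>Pow {..<m1}. \<Sum>T\<in>Pow {..<m2}. f S T)"
proof -
  have "fourier_support g m1 m2 \<subseteq> Pow {..<m1} \<times> Pow {..<m2}" by (auto simp: fourier_support_def)
  then have "(\<Sum>(S, T)\<in>fourier_support g m1 m2. f S T) = (\<Sum>(S, T)\<in>Pow {..<m1} \<times> Pow {..<m2}. f S T)"
    by (rule sum.mono_neutral_left[rotated]) (auto simp: fourier_support_def assms)
  then show ?thesis by (simp add: sum.cartesian_product)
qed

lemma ghat_inversion_support:
  "x \<in> cube m1 \<Longrightarrow> y \<in> cube m2
     \<Longrightarrow> g x y = (\<Sum>(S, T)\<in>fourier_support g m1 m2. ghat g m1 m2 S T * (chi x S * chi y T))"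
  by (subst sum_fourier_support) (simp_all add: ghat_inversion mult.assoc)

section \<open>Fibers of balanced gadgets\<close>

definition level_set :: "((nat \<Rightarrow> real) \<Rightarrow> (nat \<Rightarrow> real) \<Rightarrow> real) \<Rightarrow> nat \<Rightarrow> nat \<Rightarrow> real
    \<Rightarrow> ((nat \<Rightarrow> real) \<times> (nat \<Rightarrow> real)) set" where
  "level_set g m1 m2 c = {(x, y). x \<in> cube m1 \<and> y \<in> cube m2 \<and> g x y = c}"

lemma card_level_set:
  assumes gadget: "\<And>x y. x \<in> cube m1 \<Longrightarrow> y \<in> cube m2 \<Longrightarrow> g x y \<in> {-1, 1}"
    and balanced: "ghat g m1 m2 {} {} = 0" and c: "c \<in> {-1, 1}"
  shows "real (card (level_set g m1 m2 c)) = 2 ^ (m1 + m2) / 2"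
proof -
  have "level_set g m1 m2 c = {p \<in> cube m1 \<times> cube m2. g (fst p) (snd p) = c}"
    by (auto simp: level_set_def)
  then have "real (card (level_set g m1 m2 c))
      = (\<Sum>p\<in>cube m1 \<times> cube m2. if g (fst p) (snd p) = c then 1 else 0)"
    by (simp add: sum.inter_filter[symmetric])
  also have "\<dots> = (\<Sum>x\<in>cube m1. \<Sum>y\<in>cube m2. if g x y = c then 1 else 0)"
    by (simp add: sum.cartesian_product case_prod_beta)
  also have "\<dots> = (\<Sum>x\<in>cube m1. \<Sum>y\<in>cube m2. 1 / 2 + c * g x y / 2)"
    using gadget c by (intro sum.cong refl) force
  also have "\<dots> = 2 ^ (m1 + m2) / 2 + c * 2 ^ (m1 + m2) * ghat g m1 m2 {} {} / 2"
    by (simp add: sum.distrib sum_divide_distrib[symmetric] sum_distrib_left[symmetric]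
        ghat_def card_cube power_add)
  finally show ?thesis using balanced by simp
qed

definition blocks :: "nat \<Rightarrow> nat \<Rightarrow> input set" where
  "blocks m n = {..<n} \<rightarrow>\<^sub>E cube m"

lemma finite_blocks [simp]: "finite (blocks m n)"
  unfolding blocks_def by (auto intro!: finite_PiE)

lemma card_blocks: "card (blocks m n) = 2 ^ (m * n)"
  unfolding blocks_def by (simp add: card_PiE card_cube power_mult)

lemma mem_blocks_iff:
  "X \<in> blocks m n \<longleftrightarrow> (\<forall>j<n. X j \<in> cube m) \<and> (\<forall>j. \<not> j < n \<longrightarrow> X j = undefined)"
  by (auto simp: blocks_def PiE_iff extensional_def)

definition block_mean :: "nat \<Rightarrow> nat \<Rightarrow> nat \<Rightarrow> (input \<Rightarrow> input \<Rightarrow> real) \<Rightarrow> real" where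
  "block_mean m1 m2 n F = (\<Sum>X\<in>blocks m1 n. \<Sum>Y\<in>blocks m2 n. F X Y) / 2 ^ ((m1 + m2) * n)"

lemma block_mean_cong:
  "(\<And>X Y. X \<in> blocks m1 n \<Longrightarrow> Y \<in> blocks m2 n \<Longrightarrow> F X Y = G X Y)
     \<Longrightarrow> block_mean m1 m2 n F = block_mean m1 m2 n G"
  unfolding block_mean_def by (simp cong: sum.cong)

lemma block_mean_sum:
  "block_mean m1 m2 n (\<lambda>X Y. \<Sum>a\<in>A. F a X Y) = (\<Sum>a\<in>A. block_mean m1 m2 n (F a))"
proof -
  have "(\<Sum>X\<in>blocks m1 n. \<Sum>Y\<in>blocks m2 n. \<Sum>a\<in>A. F a X Y) = (\<Sum>a\<in>A. \<Sum>X\<in>blocks m1 n. \<Sum>Y\<in>blocks m2 n. F a X Y)"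
    by (rule trans[OF sum.cong[OF refl sum.swap] sum.swap])
  then show ?thesis unfolding block_mean_def by (simp add: sum_divide_distrib)
qed

lemma block_mean_cmult:
  "block_mean m1 m2 n (\<lambda>X Y. c * F X Y) = c * block_mean m1 m2 n F"
  unfolding block_mean_def by (simp add: sum_distrib_left)

lemma sum_abs_block_mean_le:
  assumes "\<And>X Y. X \<in> blocks m1 n \<Longrightarrow> Y \<in> blocks m2 n \<Longrightarrow> (\<Sum>I\<in>J. \<bar>F X Y I\<bar>) \<le> L"
  shows "(\<Sum>I\<in>J. \<bar>block_mean m1 m2 n (\<lambda>X Y. F X Y I)\<bar>) \<le> L"
proof -
  let ?A = "blocks m1 n \<times> blocks m2 n" and ?N = "(2::real) ^ ((m1 + m2) * n)"
  have mean: "block_mean m1 m2 n (\<lambda>X Y. F X Y I) = (\<Sum>p\<in>?A. 1 / ?N * F (fst p) (snd p) I)" for I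
    by (simp add: block_mean_def sum.cartesian_product case_prod_beta sum_divide_distrib)
  have total: "(\<Sum>p\<in>?A. 1 / ?N) = 1"
    by (simp add: card_cartesian_product card_blocks power_add add_mult_distrib)
  have "(\<Sum>I\<in>J. \<bar>block_mean m1 m2 n (\<lambda>X Y. F X Y I)\<bar>)
      = (\<Sum>I\<in>J. \<bar>\<Sum>p\<in>?A. 1 / ?N * F (fst p) (snd p) I\<bar>)"
    by (simp only: mean)
  also have "\<dots> \<le> L"
    by (rule sum_abs_convex_combination_le[OF _ total]) (auto intro: assms)
  finally show ?thesis .
qed

definition fiber_set :: "((nat \<Rightarrow> real) \<Rightarrow> (nat \<Rightarrow> real) \<Rightarrow> real) \<Rightarrow> nat \<Rightarrow> nat \<Rightarrow> nat
    \<Rightarrow> (nat \<Rightarrow> real) \<Rightarrow> (input \<times> input) set" where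
  "fiber_set g m1 m2 n z =
     {(X, Y). X \<in> blocks m1 n \<and> Y \<in> blocks m2 n \<and> (\<forall>i<n. g (X i) (Y i) = z i)}"

lemma fiber_altdef:
  "fiber g m1 m2 n C z = (\<Sum>(X, Y)\<in>fiber_set g m1 m2 n z. C X Y) / card (fiber_set g m1 m2 n z)"
  unfolding fiber_def fiber_set_def blocks_def Let_def ..

lemma card_fiber_set:
  assumes z: "z \<in> cube n" and K: "\<And>c. c \<in> {-1, 1} \<Longrightarrow> real (card (level_set g m1 m2 c)) = K"
  shows "real (card (fiber_set g m1 m2 n z)) = K ^ n"
proof -
  let ?zip = "\<lambda>p. \<lambda>i\<in>{..<n}. (fst p i, snd p i)"
  let ?unzip = "\<lambda>\<Phi>. (\<lambda>i\<in>{..<n}. fst (\<Phi> i), \<lambda>i\<in>{..<n}. snd (\<Phi> i))"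
  have "bij_betw ?zip (fiber_set g m1 m2 n z) (PiE {..<n} (\<lambda>i. level_set g m1 m2 (z i)))"
  proof (rule bij_betw_byWitness[where f' = ?unzip])
    show "\<forall>p\<in>fiber_set g m1 m2 n z. ?unzip (?zip p) = p"
      by (auto simp: fiber_set_def blocks_def PiE_iff extensional_def fun_eq_iff)
    show "\<forall>\<Phi>\<in>PiE {..<n} (\<lambda>i. level_set g m1 m2 (z i)). ?zip (?unzip \<Phi>) = \<Phi>"
      by (auto simp: PiE_iff extensional_def fun_eq_iff)
    show "?zip ` fiber_set g m1 m2 n z \<subseteq> PiE {..<n} (\<lambda>i. level_set g m1 m2 (z i))"
    proof (rule image_subsetI)
      fix p assume "p \<in> fiber_set g m1 m2 n z"
      then show "?zip p \<in> PiE {..<n} (\<lambda>i. level_set g m1 m2 (z i))"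
        unfolding restrict_PiE_iff by (auto simp: fiber_set_def mem_blocks_iff level_set_def)
    qed
    show "?unzip ` PiE {..<n} (\<lambda>i. level_set g m1 m2 (z i)) \<subseteq> fiber_set g m1 m2 n z"
    proof (rule image_subsetI)
      fix \<Phi> assume \<Phi>: "\<Phi> \<in> PiE {..<n} (\<lambda>i. level_set g m1 m2 (z i))"
      have "fst (\<Phi> i) \<in> cube m1 \<and> snd (\<Phi> i) \<in> cube m2 \<and> g (fst (\<Phi> i)) (snd (\<Phi> i)) = z i"
        if "i < n" for i
        using PiE_mem[OF \<Phi>, of i] that by (auto simp: level_set_def)
      then show "?unzip \<Phi> \<in> fiber_set g m1 m2 n z" by (simp add: fiber_set_def blocks_def)
    qed
  qed
  then have "card (fiber_set g m1 m2 n z) = (\<Prod>i<n. card (level_set g m1 m2 (z i)))"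
    by (simp add: bij_betw_same_card card_PiE)
  also have "real \<dots> = (\<Prod>i<n. K)"
    using z by (simp add: K mem_cube_iff)
  finally show ?thesis by simp
qed

lemma fhat_fiber:
  assumes gadget: "\<And>x y. x \<in> cube m1 \<Longrightarrow> y \<in> cube m2 \<Longrightarrow> g x y \<in> {-1, 1}"
    and balanced: "ghat g m1 m2 {} {} = 0" and I: "I \<subseteq> {..<n}"
  shows "fhat (fiber g m1 m2 n C) n I = block_mean m1 m2 n (\<lambda>X Y. C X Y * (\<Prod>i\<in>I. g (X i) (Y i)))"
proof -
  let ?K = "(2::real) ^ (m1 + m2) / 2"
  let ?h = "\<lambda>(X, Y). C X Y * (\<Prod>i\<in>I. g (X i) (Y i))"
  let ?zvec = "\<lambda>(X, Y). \<lambda>i\<in>{..<n}. g (X i) (Y i)"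
  have card_fiber: "real (card (fiber_set g m1 m2 n z)) = ?K ^ n" if "z \<in> cube n" for z
    using that by (rule card_fiber_set) (rule card_level_set[OF gadget balanced])
  have fiber_is_preimage: "fiber_set g m1 m2 n z = {p \<in> blocks m1 n \<times> blocks m2 n. ?zvec p = z}"
    if "z \<in> cube n" for z
    using that by (auto simp: fiber_set_def mem_cube_iff fun_eq_iff) metis
  have "fhat (fiber g m1 m2 n C) n I = (\<Sum>z\<in>cube n. (\<Sum>p\<in>fiber_set g m1 m2 n z. ?h p) / ?K ^ n) / 2 ^ n"
    unfolding fhat_def
  proof (intro arg_cong[where f = "\<lambda>t. t / 2 ^ n"] sum.cong refl)
    fix z assume z: "z \<in> cube n"
    have "(\<Sum>(X, Y)\<in>fiber_set g m1 m2 n z. C X Y) * (\<Prod>i\<in>I. z i) = (\<Sum>p\<in>fiber_set g m1 m2 n z. ?h p)"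
      using I by (auto simp: sum_distrib_right fiber_set_def subset_iff intro!: sum.cong prod.cong)
    then show "fiber g m1 m2 n C z * (\<Prod>i\<in>I. z i) = (\<Sum>p\<in>fiber_set g m1 m2 n z. ?h p) / ?K ^ n"
      by (simp add: fiber_altdef card_fiber[OF z])
  qed
  also have "\<dots> = (\<Sum>z\<in>cube n. \<Sum>p\<in>{p \<in> blocks m1 n \<times> blocks m2 n. ?zvec p = z}. ?h p) / ?K ^ n / 2 ^ n"
    by (simp add: fiber_is_preimage sum_divide_distrib)
  also have "\<dots> = (\<Sum>p\<in>blocks m1 n \<times> blocks m2 n. ?h p) / ?K ^ n / 2 ^ n"
  proof -
    have "?zvec ` (blocks m1 n \<times> blocks m2 n) \<subseteq> cube n"
      using gadget by (auto simp: mem_cube_iff mem_blocks_iff)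
    then show ?thesis by (subst sum.group) auto
  qed
  also have "\<dots> = block_mean m1 m2 n (\<lambda>X Y. C X Y * (\<Prod>i\<in>I. g (X i) (Y i)))"
  proof -
    have "?K ^ n * 2 ^ n = 2 ^ ((m1 + m2) * n)"
      by (simp add: power_mult_distrib[symmetric] power_mult)
    then show ?thesis
      by (simp add: block_mean_def sum.cartesian_product divide_divide_eq_left)
  qed
  finally show ?thesis .
qed

section \<open>Protocols\<close>

fun map_proto_inputs :: "('a \<Rightarrow> 'c) \<Rightarrow> ('b \<Rightarrow> 'd) \<Rightarrow> ('c, 'd) proto \<Rightarrow> ('a, 'b) proto" where
  "map_proto_inputs f h (Leaf v) = Leaf v"
| "map_proto_inputs f h (ANode q l r) = ANode (q \<circ> f) (map_proto_inputs f h l) (map_proto_inputs f h r)"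
| "map_proto_inputs f h (BNode q l r) = BNode (q \<circ> h) (map_proto_inputs f h l) (map_proto_inputs f h r)"

lemma eval_map_proto_inputs: "eval_proto (map_proto_inputs f h P) x y = eval_proto P (f x) (h y)"
  by (induction P) auto

lemma cost_map_proto_inputs [simp]: "cost (map_proto_inputs f h P) = cost P"
  by (induction P) auto

lemma outputs_bounded_map_proto_inputs [simp]:
  "outputs_bounded (map_proto_inputs f h P) = outputs_bounded P"
  by (induction P) auto

lemma rand_protocols_map_inputs:
  "p \<in> rand_protocols d \<Longrightarrow> map_pmf (map_proto_inputs f h) p \<in> rand_protocols d"
  by (auto simp: rand_protocols_def)

lemma rvalue_map_inputs: "rvalue (map_pmf (map_proto_inputs f h) p) x y = rvalue p (f x) (h y)"
  by (simp add: rvalue_def eval_map_proto_inputs)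

lemma abs_eval_proto_le_1: "outputs_bounded P \<Longrightarrow> \<bar>eval_proto P x y\<bar> \<le> 1"
  by (induction P) auto

lemma abs_rvalue_le_1:
  assumes "p \<in> rand_protocols d"
  shows "\<bar>rvalue p x y\<bar> \<le> 1"
proof -
  have bound: "AE P in measure_pmf p. \<bar>eval_proto P x y\<bar> \<le> 1"
    using assms by (intro AE_pmfI) (auto simp: rand_protocols_def intro: abs_eval_proto_le_1)
  then have int: "integrable (measure_pmf p) (\<lambda>P. eval_proto P x y)"
    by (intro measure_pmf.integrable_const_bound[where B = 1]) simp_all
  have "rvalue p x y \<le> 1" "-1 \<le> rvalue p x y"
    unfolding rvalue_def using bound
    by (auto intro!: measure_pmf.integral_le_const measure_pmf.integral_ge_const int elim!: eventually_mono)
  then show ?thesis by simp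
qed

lemma abs_fiber_le_1:
  assumes "\<And>X Y. \<bar>C X Y\<bar> \<le> 1"
  shows "\<bar>fiber g m1 m2 n C z\<bar> \<le> 1"
proof -
  let ?A = "fiber_set g m1 m2 n z"
  have "\<bar>\<Sum>(X, Y)\<in>?A. C X Y\<bar> \<le> (\<Sum>_\<in>?A. 1)"
    by (rule order_trans[OF sum_abs sum_mono]) (auto simp: assms)
  then show ?thesis
    by (cases "card ?A = 0") (simp_all add: fiber_altdef abs_divide divide_le_eq_1)
qed

lemma abs_fhat_le_1:
  assumes f: "\<And>z. \<bar>f z\<bar> \<le> 1" and I: "I \<subseteq> {..<n}"
  shows "\<bar>fhat f n I\<bar> \<le> 1"
proof -
  have "\<bar>f z * (\<Prod>i\<in>I. z i)\<bar> \<le> 1" if "z \<in> cube n" for z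
  proof -
    have "(\<Prod>i\<in>I. z i) \<in> {-1, 1}"
      using that I by (intro prod_in_pm1) (auto simp: mem_cube_iff)
    then show ?thesis using f[of z] by (auto simp: abs_mult)
  qed
  then have "\<bar>\<Sum>z\<in>cube n. f z * (\<Prod>i\<in>I. z i)\<bar> \<le> (\<Sum>_\<in>cube n. 1)"
    by (rule order_trans[OF sum_abs sum_mono])
  then show ?thesis by (simp add: fhat_def abs_divide card_cube)
qed

lemma L1k_fiber_le_card:
  assumes "p \<in> rand_protocols d"
  shows "L1k (fiber g m1 m2 n (rvalue p)) n k \<le> card {I. I \<subseteq> {..<n} \<and> card I = k}"
proof -
  have "L1k (fiber g m1 m2 n (rvalue p)) n k \<le> (\<Sum>I\<in>{I. I \<subseteq> {..<n} \<and> card I = k}. 1)"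
    unfolding L1k_def
    by (intro sum_mono abs_fhat_le_1 abs_fiber_le_1 abs_rvalue_le_1[OF assms]) auto
  then show ?thesis by simp
qed

lemma L1k_le_L1k_gadget:
  assumes "p \<in> rand_protocols d"
  shows "L1k (fiber g m1 m2 n (rvalue p)) n k \<le> L1k_gadget g d m1 m2 n k"
  unfolding L1k_gadget_def
  by (rule cSUP_upper[OF assms bdd_aboveI2[OF L1k_fiber_le_card]])

lemma return_Leaf_in_rand_protocols: "return_pmf (Leaf 0) \<in> rand_protocols d"
  by (simp add: rand_protocols_def)

lemma L1k_gadget_nonneg: "0 \<le> L1k_gadget g d m1 m2 n k"
  using L1k_le_L1k_gadget[OF return_Leaf_in_rand_protocols] by (rule order_trans[rotated]) (simp add: L1k_def)

lemma L1k_gadget_le: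
  assumes "\<And>p. p \<in> rand_protocols d \<Longrightarrow> L1k (fiber g m1 m2 n (rvalue p)) n k \<le> B"
  shows "L1k_gadget g d m1 m2 n k \<le> B"
  unfolding L1k_gadget_def by (rule cSUP_least) (use return_Leaf_in_rand_protocols assms in auto)

section \<open>Planting XOR instances\<close>

definition flip_pivots :: "nat \<Rightarrow> nat \<Rightarrow> (nat \<Rightarrow> nat set) \<Rightarrow> input \<Rightarrow> input \<Rightarrow> input" where
  "flip_pivots m n S X c = (\<lambda>j\<in>{..<n}. \<lambda>t\<in>{..<m}. X j t * (if t = Min (S j) then c j 0 else 1))"

definition scale_bits :: "nat \<Rightarrow> (nat \<Rightarrow> real) \<Rightarrow> input \<Rightarrow> input" where
  "scale_bits n s a = (\<lambda>j\<in>{..<n}. \<lambda>t\<in>{..<1}. s j * a j 0)"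

(* Block j of plant m n S X a is X j with its pivot coordinate Min (S j) multiplied by
   a j 0 * chi (X j) (S j); since the pivot lies in S j, the parity of the new block over S j
   is exactly the bit a j 0. *)
definition plant :: "nat \<Rightarrow> nat \<Rightarrow> (nat \<Rightarrow> nat set) \<Rightarrow> input \<Rightarrow> input \<Rightarrow> input" where
  "plant m n S X a = flip_pivots m n S X (scale_bits n (\<lambda>j. chi (X j) (S j)) a)"

lemma bit_in_pm1: "a \<in> blocks 1 n \<Longrightarrow> j < n \<Longrightarrow> a j 0 \<in> {-1, 1}"
  by (simp add: mem_blocks_iff mem_cube_iff)

lemma flip_pivots_in_blocks:
  assumes X: "X \<in> blocks m n" and c: "c \<in> blocks 1 n"
  shows "flip_pivots m n S X c \<in> blocks m n"
  unfolding mem_blocks_iff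
proof (intro conjI allI impI)
  fix j assume j: "j < n"
  have "X j t * (if t = Min (S j) then c j 0 else 1) \<in> {-1, 1}" if "t < m" for t
  proof (rule mult_in_pm1)
    show "X j t \<in> {-1, 1}" using X j that by (simp add: mem_blocks_iff mem_cube_iff)
    show "(if t = Min (S j) then c j 0 else 1) \<in> {-1, 1}" using bit_in_pm1[OF c j] by simp
  qed
  then show "flip_pivots m n S X c j \<in> cube m"
    using j by (simp add: flip_pivots_def mem_cube_iff)
qed (simp add: flip_pivots_def)

lemma flip_pivots_flip_pivots:
  assumes X: "X \<in> blocks m n" and c: "c \<in> blocks 1 n"
  shows "flip_pivots m n S (flip_pivots m n S X c) c = X"
proof (intro ext)
  fix j t
  show "flip_pivots m n S (flip_pivots m n S X c) c j t = X j t"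
  proof (cases "j < n \<and> t < m")
    case True
    then have "c j 0 * c j 0 = 1" using bit_in_pm1[OF c, of j] by auto
    then show ?thesis using True by (simp add: flip_pivots_def mult.assoc)
  next
    case False
    then show ?thesis using X by (auto simp: flip_pivots_def mem_blocks_iff mem_cube_iff)
  qed
qed

lemma chi_flip_pivots:
  assumes "j < n" and "S j \<subseteq> {..<m}" and "S j \<noteq> {}"
  shows "chi (flip_pivots m n S X c j) (S j) = chi (X j) (S j) * c j 0"
proof -
  have fin: "finite (S j)" using assms(2) finite_subset by blast
  have "chi (flip_pivots m n S X c j) (S j) = (\<Prod>t\<in>S j. X j t * (if t = Min (S j) then c j 0 else 1))"
    unfolding chi_def using assms(1,2) by (intro prod.cong) (auto simp: flip_pivots_def)
  also have "\<dots> = chi (X j) (S j) * c j 0"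
    using fin Min_in[OF fin assms(3)] by (simp add: chi_def prod.distrib prod.delta)
  finally show ?thesis .
qed

lemma scale_bits_in_blocks:
  assumes s: "\<And>j. j < n \<Longrightarrow> s j \<in> {-1, 1}" and a: "a \<in> blocks 1 n"
  shows "scale_bits n s a \<in> blocks 1 n"
  unfolding mem_blocks_iff
proof (intro conjI allI impI)
  fix j assume j: "j < n"
  have "s j * a j 0 \<in> {-1, 1}" using s[OF j] bit_in_pm1[OF a j] by (rule mult_in_pm1)
  then show "scale_bits n s a j \<in> cube 1" using j by (auto simp: scale_bits_def mem_cube_iff)
qed (simp add: scale_bits_def)

lemma scale_bits_scale_bits:
  assumes s: "\<And>j. j < n \<Longrightarrow> s j \<in> {-1, 1}" and a: "a \<in> blocks 1 n"
  shows "scale_bits n s (scale_bits n s a) = a"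
proof (intro ext)
  fix j t
  show "scale_bits n s (scale_bits n s a) j t = a j t"
  proof (cases "j < n \<and> t = 0")
    case True
    then have "s j * s j = 1" using s by fastforce
    then show ?thesis using True by (simp add: scale_bits_def mult.assoc[symmetric])
  next
    case False
    then show ?thesis using a by (auto simp: scale_bits_def mem_blocks_iff mem_cube_iff)
  qed
qed

lemma sum_scale_bits:
  assumes "\<And>j. j < n \<Longrightarrow> s j \<in> {-1, 1}"
  shows "(\<Sum>a\<in>blocks 1 n. f (scale_bits n s a)) = (\<Sum>a\<in>blocks 1 n. f a)"
  \<comment> \<open>plain simp would first rewrite \<open>blocks 1\<close> to \<open>blocks (Suc 0)\<close> (One_nat_def) and then miss these rules\<close>
  by (rule sum.reindex_bij_witness[of _ "scale_bits n s" "scale_bits n s"])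
     (simp_all only: scale_bits_scale_bits[OF assms] scale_bits_in_blocks[OF assms])

lemma sum_flip_pivots:
  assumes "c \<in> blocks 1 n"
  shows "(\<Sum>X\<in>blocks m n. f (flip_pivots m n S X c)) = (\<Sum>X\<in>blocks m n. f X)"
  by (rule sum.reindex_bij_witness[of _ "\<lambda>X. flip_pivots m n S X c" "\<lambda>X. flip_pivots m n S X c"])
     (simp_all only: flip_pivots_flip_pivots[OF _ assms] flip_pivots_in_blocks[OF _ assms])

lemma sum_plant:
  assumes S: "\<And>j. j < n \<Longrightarrow> S j \<subseteq> {..<m} \<and> S j \<noteq> {}" and I: "I \<subseteq> {..<n}"
  shows "(\<Sum>X0\<in>blocks m n. \<Sum>a\<in>blocks 1 n. H (plant m n S X0 a) * (\<Prod>i\<in>I. a i 0))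
       = 2 ^ n * (\<Sum>X\<in>blocks m n. H X * (\<Prod>i\<in>I. chi (X i) (S i)))"
proof -
  let ?s = "\<lambda>X0 j. chi (X0 j) (S j)"
  have "(\<Sum>X0\<in>blocks m n. \<Sum>a\<in>blocks 1 n. H (plant m n S X0 a) * (\<Prod>i\<in>I. a i 0))
      = (\<Sum>X0\<in>blocks m n. \<Sum>c\<in>blocks 1 n. H (flip_pivots m n S X0 c) * (\<Prod>i\<in>I. ?s X0 i * c i 0))"
  proof (rule sum.cong[OF refl])
    fix X0 assume X0: "X0 \<in> blocks m n"
    have s: "?s X0 j \<in> {-1, 1}" if "j < n" for j
      using X0 that S by (intro chi_in_pm1[of _ m]) (auto simp: mem_blocks_iff)
    then have "?s X0 i * ?s X0 i = 1" if "i \<in> I" for i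
      using that I by fastforce
    then have "H (plant m n S X0 a) * (\<Prod>i\<in>I. a i 0)
        = H (flip_pivots m n S X0 (scale_bits n (?s X0) a)) * (\<Prod>i\<in>I. ?s X0 i * scale_bits n (?s X0) a i 0)" for a
      using I by (auto simp: plant_def scale_bits_def mult.assoc[symmetric] intro!: prod.cong)
    then show "(\<Sum>a\<in>blocks 1 n. H (plant m n S X0 a) * (\<Prod>i\<in>I. a i 0))
        = (\<Sum>c\<in>blocks 1 n. H (flip_pivots m n S X0 c) * (\<Prod>i\<in>I. ?s X0 i * c i 0))"
      using sum_scale_bits[OF s, where f = "\<lambda>c. H (flip_pivots m n S X0 c) * (\<Prod>i\<in>I. ?s X0 i * c i 0)"]
      by simp
  qed
  also have "\<dots> = (\<Sum>c\<in>blocks 1 n. \<Sum>X0\<in>blocks m n. H (flip_pivots m n S X0 c) * (\<Prod>i\<in>I. ?s X0 i * c i 0))"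
    by (rule sum.swap)
  also have "\<dots> = (\<Sum>c\<in>blocks 1 n. \<Sum>X\<in>blocks m n. H X * (\<Prod>i\<in>I. chi (X i) (S i)))"
  proof (rule sum.cong[OF refl])
    fix c assume c: "c \<in> blocks 1 n"
    have planted: "H (flip_pivots m n S X0 c) * (\<Prod>i\<in>I. ?s X0 i * c i 0)
        = H (flip_pivots m n S X0 c) * (\<Prod>i\<in>I. chi (flip_pivots m n S X0 c i) (S i))" for X0
      using I S by (auto simp: chi_flip_pivots intro!: prod.cong)
    show "(\<Sum>X0\<in>blocks m n. H (flip_pivots m n S X0 c) * (\<Prod>i\<in>I. ?s X0 i * c i 0))
        = (\<Sum>X\<in>blocks m n. H X * (\<Prod>i\<in>I. chi (X i) (S i)))"
      unfolding planted by (rule sum_flip_pivots[OF c, where f = "\<lambda>X. H X * (\<Prod>i\<in>I. chi (X i) (S i))"])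
  qed
  finally show ?thesis by (simp add: card_blocks)
qed

lemma XOR_in_pm1: "x \<in> cube 1 \<Longrightarrow> y \<in> cube 1 \<Longrightarrow> XOR x y \<in> {-1, 1}"
  by (auto simp: XOR_def mem_cube_iff)

lemma ghat_XOR_empty: "ghat XOR 1 1 {} {} = 0"
  using sum_cube_chi[of "{0}" 1] by (simp add: ghat_def XOR_def chi_def sum_product[symmetric])

lemma prod_XOR: "(\<Prod>i\<in>I. XOR (a i) (b i)) = (\<Prod>i\<in>I. a i 0) * (\<Prod>i\<in>I. b i 0)"
  by (simp add: XOR_def prod.distrib)

lemma sum_plant_pair:
  assumes S: "\<And>j. j < n \<Longrightarrow> S j \<subseteq> {..<m1} \<and> S j \<noteq> {}"
    and T: "\<And>j. j < n \<Longrightarrow> T j \<subseteq> {..<m2} \<and> T j \<noteq> {}" and I: "I \<subseteq> {..<n}"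
  shows "(\<Sum>X0\<in>blocks m1 n. \<Sum>Y0\<in>blocks m2 n. \<Sum>a\<in>blocks 1 n. \<Sum>b\<in>blocks 1 n.
           C (plant m1 n S X0 a) (plant m2 n T Y0 b) * (\<Prod>i\<in>I. XOR (a i) (b i)))
       = 2 ^ n * 2 ^ n * (\<Sum>X\<in>blocks m1 n. \<Sum>Y\<in>blocks m2 n.
           C X Y * (\<Prod>i\<in>I. chi (X i) (S i) * chi (Y i) (T i)))"
proof -
  let ?P = "\<lambda>a::input. \<Prod>i\<in>I. a i 0"
  let ?\<chi>S = "\<lambda>X. \<Prod>i\<in>I. chi (X i) (S i)" and ?\<chi>T = "\<lambda>Y. \<Prod>i\<in>I. chi (Y i) (T i)"
  let ?pS = "plant m1 n S" and ?pT = "plant m2 n T"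
  have "(\<Sum>X0\<in>blocks m1 n. \<Sum>Y0\<in>blocks m2 n. \<Sum>a\<in>blocks 1 n. \<Sum>b\<in>blocks 1 n.
          C (?pS X0 a) (?pT Y0 b) * (\<Prod>i\<in>I. XOR (a i) (b i)))
      = (\<Sum>X0\<in>blocks m1 n. \<Sum>a\<in>blocks 1 n. ?P a * (\<Sum>Y0\<in>blocks m2 n. \<Sum>b\<in>blocks 1 n.
          C (?pS X0 a) (?pT Y0 b) * ?P b))"
    by (rule sum.cong[OF refl], subst sum.swap) (simp add: sum_distrib_left prod_XOR mult_ac)
  also have "\<dots> = (\<Sum>X0\<in>blocks m1 n. \<Sum>a\<in>blocks 1 n. \<Sum>Y\<in>blocks m2 n.
          2 ^ n * (?\<chi>T Y * (C (?pS X0 a) Y * ?P a)))"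
  proof (intro sum.cong refl)
    fix X0 a
    show "?P a * (\<Sum>Y0\<in>blocks m2 n. \<Sum>b\<in>blocks 1 n. C (?pS X0 a) (?pT Y0 b) * ?P b)
        = (\<Sum>Y\<in>blocks m2 n. 2 ^ n * (?\<chi>T Y * (C (?pS X0 a) Y * ?P a)))"
      using sum_plant[where S = T and H = "C (?pS X0 a)", OF T I] by (simp add: sum_distrib_left mult_ac)
  qed
  also have "\<dots> = (\<Sum>Y\<in>blocks m2 n. \<Sum>X0\<in>blocks m1 n. \<Sum>a\<in>blocks 1 n.
          2 ^ n * (?\<chi>T Y * (C (?pS X0 a) Y * ?P a)))"
    by (subst sum.swap, rule sum.cong[OF refl], rule sum.swap)
  also have "\<dots> = (\<Sum>Y\<in>blocks m2 n. 2 ^ n * ?\<chi>T Y * (\<Sum>X0\<in>blocks m1 n. \<Sum>a\<in>blocks 1 n.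
          C (?pS X0 a) Y * ?P a))"
    by (simp add: sum_distrib_left mult_ac)
  also have "\<dots> = (\<Sum>Y\<in>blocks m2 n. 2 ^ n * ?\<chi>T Y * (2 ^ n * (\<Sum>X\<in>blocks m1 n. C X Y * ?\<chi>S X)))"
    by (intro sum.cong refl arg_cong[where f = "\<lambda>t. _ * t"] sum_plant[OF S I])
  also have "\<dots> = 2 ^ n * 2 ^ n * (\<Sum>X\<in>blocks m1 n. \<Sum>Y\<in>blocks m2 n. C X Y * (?\<chi>S X * ?\<chi>T Y))"
    by (subst sum.swap) (simp add: sum_distrib_left mult_ac)
  finally show ?thesis by (simp add: prod.distrib)
qed

lemma block_mean_plant:
  assumes S: "\<And>j. j < n \<Longrightarrow> S j \<subseteq> {..<m1} \<and> S j \<noteq> {}"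
    and T: "\<And>j. j < n \<Longrightarrow> T j \<subseteq> {..<m2} \<and> T j \<noteq> {}" and I: "I \<subseteq> {..<n}"
  shows "block_mean m1 m2 n (\<lambda>X0 Y0. block_mean 1 1 n
           (\<lambda>a b. C (plant m1 n S X0 a) (plant m2 n T Y0 b) * (\<Prod>i\<in>I. XOR (a i) (b i))))
       = block_mean m1 m2 n (\<lambda>X Y. C X Y * (\<Prod>i\<in>I. chi (X i) (S i) * chi (Y i) (T i)))"
  using sum_plant_pair[where C = C, OF S T I]
  by (simp add: block_mean_def sum_divide_distrib[symmetric] power_mult_distrib power_add power_mult)

lemma sum_abs_block_mean_chi_le:
  assumes p: "p \<in> rand_protocols d"
    and S: "\<And>j. j < n \<Longrightarrow> S j \<subseteq> {..<m1} \<and> S j \<noteq> {}"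
    and T: "\<And>j. j < n \<Longrightarrow> T j \<subseteq> {..<m2} \<and> T j \<noteq> {}"
  shows "(\<Sum>I\<in>{I. I \<subseteq> {..<n} \<and> card I = k}.
           \<bar>block_mean m1 m2 n (\<lambda>X Y. rvalue p X Y * (\<Prod>i\<in>I. chi (X i) (S i) * chi (Y i) (T i)))\<bar>)
         \<le> L1k_gadget XOR d 1 1 n k"
proof -
  let ?q = "\<lambda>X0 Y0. map_pmf (map_proto_inputs (plant m1 n S X0) (plant m2 n T Y0)) p"
  have "block_mean m1 m2 n (\<lambda>X Y. rvalue p X Y * (\<Prod>i\<in>I. chi (X i) (S i) * chi (Y i) (T i)))
      = block_mean m1 m2 n (\<lambda>X0 Y0. fhat (fiber XOR 1 1 n (rvalue (?q X0 Y0))) n I)"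
    if I: "I \<subseteq> {..<n}" for I
    by (simp only: fhat_fiber[OF XOR_in_pm1 ghat_XOR_empty I] rvalue_map_inputs
        block_mean_plant[where C = "rvalue p", OF S T I])
  then have "(\<Sum>I\<in>{I. I \<subseteq> {..<n} \<and> card I = k}.
           \<bar>block_mean m1 m2 n (\<lambda>X Y. rvalue p X Y * (\<Prod>i\<in>I. chi (X i) (S i) * chi (Y i) (T i)))\<bar>)
      = (\<Sum>I\<in>{I. I \<subseteq> {..<n} \<and> card I = k}.
           \<bar>block_mean m1 m2 n (\<lambda>X0 Y0. fhat (fiber XOR 1 1 n (rvalue (?q X0 Y0))) n I)\<bar>)"
    by (intro sum.cong refl) simp
  also have "\<dots> \<le> L1k_gadget XOR d 1 1 n k"
  proof (rule sum_abs_block_mean_le)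
    fix X0 Y0
    show "(\<Sum>I\<in>{I. I \<subseteq> {..<n} \<and> card I = k}. \<bar>fhat (fiber XOR 1 1 n (rvalue (?q X0 Y0))) n I\<bar>)
        \<le> L1k_gadget XOR d 1 1 n k"
      using L1k_le_L1k_gadget[OF rand_protocols_map_inputs[OF p]] by (simp add: L1k_def)
  qed
  finally show ?thesis .
qed

section \<open>The lifting theorem\<close>

definition chi_correlation :: "nat \<Rightarrow> nat \<Rightarrow> nat \<Rightarrow> (input \<Rightarrow> input \<Rightarrow> real)
    \<Rightarrow> (nat \<Rightarrow> nat set \<times> nat set) \<Rightarrow> nat set \<Rightarrow> real" where
  "chi_correlation m1 m2 n C \<psi> I =
     block_mean m1 m2 n (\<lambda>X Y. C X Y * (\<Prod>i\<in>I. chi (X i) (fst (\<psi> i)) * chi (Y i) (snd (\<psi> i))))"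

context
  fixes g :: "(nat \<Rightarrow> real) \<Rightarrow> (nat \<Rightarrow> real) \<Rightarrow> real" and m1 m2 :: nat
  assumes gadget: "\<And>x y. x \<in> cube m1 \<Longrightarrow> y \<in> cube m2 \<Longrightarrow> g x y \<in> {-1, 1}"
    and vanish: "\<And>S T. S \<subseteq> {..<m1} \<Longrightarrow> T \<subseteq> {..<m2} \<Longrightarrow> S = {} \<or> T = {}
                   \<Longrightarrow> ghat g m1 m2 S T = 0"
begin

definition fourier_mass :: real where
  "fourier_mass = (\<Sum>u\<in>fourier_support g m1 m2. \<bar>ghat g m1 m2 (fst u) (snd u)\<bar>)"

definition choice_weight :: "nat \<Rightarrow> (nat \<Rightarrow> nat set \<times> nat set) \<Rightarrow> real" where
  "choice_weight n \<psi> = (\<Prod>j<n. \<bar>ghat g m1 m2 (fst (\<psi> j)) (snd (\<psi> j))\<bar> / fourier_mass)"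

definition choice_sign :: "(nat \<Rightarrow> nat set \<times> nat set) \<Rightarrow> nat set \<Rightarrow> real" where
  "choice_sign \<psi> I = (\<Prod>i\<in>I. sgn (ghat g m1 m2 (fst (\<psi> i)) (snd (\<psi> i))))"

lemma fourier_mass_eq: "fourier_mass = (\<Sum>S\<in>Pow {..<m1}. \<Sum>T\<in>Pow {..<m2}. \<bar>ghat g m1 m2 S T\<bar>)"
  by (simp add: fourier_mass_def sum_fourier_support[symmetric] case_prod_beta)

lemma fourier_mass_pos: "0 < fourier_mass"
proof -
  obtain x y where x: "x \<in> cube m1" and y: "y \<in> cube m2" using cube_nonempty by blast
  have "fourier_support g m1 m2 \<noteq> {}"
    using ghat_inversion_support[OF x y, of g] gadget[OF x y] by auto
  then show ?thesis
    unfolding fourier_mass_def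
    by (intro sum_pos finite_fourier_support) (auto simp: fourier_support_def case_prod_beta)
qed

lemma fourier_support_nonempty:
  assumes "u \<in> fourier_support g m1 m2"
  shows "fst u \<subseteq> {..<m1} \<and> fst u \<noteq> {}" and "snd u \<subseteq> {..<m2} \<and> snd u \<noteq> {}"
  using assms vanish[of "fst u" "snd u"] by (auto simp: fourier_support_def case_prod_beta)

lemma prod_sum_ghat_expansion:
  assumes "I \<subseteq> {..<n}"
  shows "(\<Prod>i\<in>I. \<Sum>u\<in>fourier_support g m1 m2. ghat g m1 m2 (fst u) (snd u) * F i u)
       = fourier_mass ^ card I * (\<Sum>\<psi>\<in>PiE {..<n} (\<lambda>_. fourier_support g m1 m2).
           choice_weight n \<psi> * (\<Prod>i\<in>I. sgn (ghat g m1 m2 (fst (\<psi> i)) (snd (\<psi> i))) * F i (\<psi> i)))"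
  unfolding choice_weight_def
  by (rule prod_sum_normalized_expansion[OF _ fourier_mass_def fourier_mass_pos assms]) simp

lemma choice_weight_nonneg: "0 \<le> choice_weight n \<psi>"
  using fourier_mass_pos by (simp add: choice_weight_def prod_nonneg)

lemma sum_choice_weight: "(\<Sum>\<psi>\<in>PiE {..<n} (\<lambda>_. fourier_support g m1 m2). choice_weight n \<psi>) = 1"
  using prod_sum_ghat_expansion[of "{}"] by simp

lemma fhat_fiber_expansion:
  assumes I: "I \<subseteq> {..<n}"
  shows "fhat (fiber g m1 m2 n C) n I = fourier_mass ^ card I
           * (\<Sum>\<psi>\<in>PiE {..<n} (\<lambda>_. fourier_support g m1 m2).
                choice_weight n \<psi> * (choice_sign \<psi> I * chi_correlation m1 m2 n C \<psi> I))"
proof -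
  let ?\<Psi> = "PiE {..<n} (\<lambda>_. fourier_support g m1 m2)"
  let ?\<chi> = "\<lambda>X Y I \<psi>. \<Prod>i\<in>I. chi (X i) (fst (\<psi> i)) * chi (Y i) (snd (\<psi> i))"
  have "fhat (fiber g m1 m2 n C) n I = block_mean m1 m2 n (\<lambda>X Y. C X Y * (\<Prod>i\<in>I. g (X i) (Y i)))"
    using I by (intro fhat_fiber gadget vanish) auto
  also have "\<dots> = block_mean m1 m2 n (\<lambda>X Y. \<Sum>\<psi>\<in>?\<Psi>.
      fourier_mass ^ card I * choice_weight n \<psi> * choice_sign \<psi> I * (C X Y * ?\<chi> X Y I \<psi>))"
  proof (rule block_mean_cong)
    fix X Y assume "X \<in> blocks m1 n" "Y \<in> blocks m2 n"
    then have "g (X i) (Y i) = (\<Sum>u\<in>fourier_support g m1 m2.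
        ghat g m1 m2 (fst u) (snd u) * (chi (X i) (fst u) * chi (Y i) (snd u)))" if "i < n" for i
      using that ghat_inversion_support[of "X i" m1 "Y i" m2 g] by (simp add: mem_blocks_iff case_prod_beta)
    then have "(\<Prod>i\<in>I. g (X i) (Y i)) = (\<Prod>i\<in>I. \<Sum>u\<in>fourier_support g m1 m2.
        ghat g m1 m2 (fst u) (snd u) * (chi (X i) (fst u) * chi (Y i) (snd u)))"
      using I by (intro prod.cong refl) auto
    also have "\<dots> = fourier_mass ^ card I * (\<Sum>\<psi>\<in>?\<Psi>. choice_weight n \<psi>
        * (\<Prod>i\<in>I. sgn (ghat g m1 m2 (fst (\<psi> i)) (snd (\<psi> i))) * (chi (X i) (fst (\<psi> i)) * chi (Y i) (snd (\<psi> i)))))"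
      by (rule prod_sum_ghat_expansion[OF I])
    finally show "C X Y * (\<Prod>i\<in>I. g (X i) (Y i)) = (\<Sum>\<psi>\<in>?\<Psi>.
        fourier_mass ^ card I * choice_weight n \<psi> * choice_sign \<psi> I * (C X Y * ?\<chi> X Y I \<psi>))"
      by (simp add: choice_sign_def prod.distrib sum_distrib_left mult_ac)
  qed
  also have "\<dots> = fourier_mass ^ card I
      * (\<Sum>\<psi>\<in>?\<Psi>. choice_weight n \<psi> * (choice_sign \<psi> I * chi_correlation m1 m2 n C \<psi> I))"
    by (simp add: block_mean_sum block_mean_cmult chi_correlation_def sum_distrib_left mult.assoc)
  finally show ?thesis .
qed

lemma sum_abs_chi_correlation_le:
  assumes p: "p \<in> rand_protocols d" and \<psi>: "\<psi> \<in> PiE {..<n} (\<lambda>_. fourier_support g m1 m2)"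
  shows "(\<Sum>I\<in>{I. I \<subseteq> {..<n} \<and> card I = k}.
           \<bar>choice_sign \<psi> I * chi_correlation m1 m2 n (rvalue p) \<psi> I\<bar>) \<le> L1k_gadget XOR d 1 1 n k"
proof -
  have "ghat g m1 m2 (fst (\<psi> i)) (snd (\<psi> i)) \<noteq> 0" if "i < n" for i
    using PiE_mem[OF \<psi>, of i] that by (simp add: fourier_support_def case_prod_beta)
  then have sign: "choice_sign \<psi> I \<in> {-1, 1}" if "I \<subseteq> {..<n}" for I
    using that unfolding choice_sign_def by (intro prod_in_pm1) (auto simp: sgn_if)
  have "\<bar>choice_sign \<psi> I * c\<bar> = \<bar>c\<bar>" if "I \<in> {I. I \<subseteq> {..<n} \<and> card I = k}" for I and c :: real
    using sign[of I] that by (auto simp: abs_mult)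
  then have "(\<Sum>I\<in>{I. I \<subseteq> {..<n} \<and> card I = k}.
        \<bar>choice_sign \<psi> I * chi_correlation m1 m2 n (rvalue p) \<psi> I\<bar>)
      = (\<Sum>I\<in>{I. I \<subseteq> {..<n} \<and> card I = k}. \<bar>chi_correlation m1 m2 n (rvalue p) \<psi> I\<bar>)"
    by (intro sum.cong refl)
  also have "\<dots> \<le> L1k_gadget XOR d 1 1 n k"
  proof -
    have "\<psi> j \<in> fourier_support g m1 m2" if "j < n" for j
      using PiE_mem[OF \<psi>, of j] that by simp
    then show ?thesis
      unfolding chi_correlation_def
      by (intro sum_abs_block_mean_chi_le[OF p] fourier_support_nonempty)
  qed
  finally show ?thesis .
qed

lemma L1k_fiber_le:
  assumes p: "p \<in> rand_protocols d"
  shows "L1k (fiber g m1 m2 n (rvalue p)) n k \<le> fourier_mass ^ k * L1k_gadget XOR d 1 1 n k"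
proof -
  let ?\<Psi> = "PiE {..<n} (\<lambda>_. fourier_support g m1 m2)" and ?levels = "{I. I \<subseteq> {..<n} \<and> card I = k}"
  let ?c = "\<lambda>\<psi> I. choice_sign \<psi> I * chi_correlation m1 m2 n (rvalue p) \<psi> I"
  have "L1k (fiber g m1 m2 n (rvalue p)) n k
      = (\<Sum>I\<in>?levels. fourier_mass ^ k * \<bar>\<Sum>\<psi>\<in>?\<Psi>. choice_weight n \<psi> * ?c \<psi> I\<bar>)"
    unfolding L1k_def using fourier_mass_pos
    by (intro sum.cong refl) (auto simp: fhat_fiber_expansion abs_mult)
  also have "\<dots> = fourier_mass ^ k * (\<Sum>I\<in>?levels. \<bar>\<Sum>\<psi>\<in>?\<Psi>. choice_weight n \<psi> * ?c \<psi> I\<bar>)"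
    by (rule sum_distrib_left[symmetric])
  also have "\<dots> \<le> fourier_mass ^ k * L1k_gadget XOR d 1 1 n k"
    using fourier_mass_pos
    by (intro mult_left_mono sum_abs_convex_combination_le choice_weight_nonneg sum_choice_weight
        sum_abs_chi_correlation_le[OF p]) simp_all
  finally show ?thesis .
qed

end

theorem theorem7p6:
  fixes g :: "(nat \<Rightarrow> real) \<Rightarrow> (nat \<Rightarrow> real) \<Rightarrow> real"
    and m1 m2 k d n :: nat
  assumes gadget: "\<And>x y. x \<in> cube m1 \<Longrightarrow> y \<in> cube m2 \<Longrightarrow> g x y \<in> {-1, 1}"
    and vanish: "\<And>S T. S \<subseteq> {..<m1} \<Longrightarrow> T \<subseteq> {..<m2} \<Longrightarrow> S = {} \<or> T = {}
                   \<Longrightarrow> ghat g m1 m2 S T = 0"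
  shows "L1k_gadget g d m1 m2 n k
           \<le> (\<Sum>S\<in>Pow {..<m1}. \<Sum>T\<in>Pow {..<m2}. \<bar>ghat g m1 m2 S T\<bar>) ^ k
               * L1k_gadget XOR d 1 1 n k
       \<and> (\<Sum>S\<in>Pow {..<m1}. \<Sum>T\<in>Pow {..<m2}. \<bar>ghat g m1 m2 S T\<bar>) ^ k
               * L1k_gadget XOR d 1 1 n k
           \<le> 2 powr (real ((m1 + m2) * k) / 2) * L1k_gadget XOR d 1 1 n k"
proof
  show "L1k_gadget g d m1 m2 n k \<le> (\<Sum>S\<in>Pow {..<m1}. \<Sum>T\<in>Pow {..<m2}. \<bar>ghat g m1 m2 S T\<bar>) ^ k
      * L1k_gadget XOR d 1 1 n k"
    by (rule L1k_gadget_le)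
       (simp only: L1k_fiber_le[OF gadget vanish] fourier_mass_eq[OF gadget vanish, symmetric])
  let ?W = "\<Sum>S\<in>Pow {..<m1}. \<Sum>T\<in>Pow {..<m2}. \<bar>ghat g m1 m2 S T\<bar>"
  have "?W ^ k \<le> (2 powr (real (m1 + m2) / 2)) ^ k"
    by (intro power_mono sum_abs_ghat_le[OF gadget] sum_nonneg) simp_all
  also have "\<dots> = 2 powr (real ((m1 + m2) * k) / 2)"
    by (subst powr_power) (simp_all add: mult_ac)
  finally show "?W ^ k * L1k_gadget XOR d 1 1 n k \<le> 2 powr (real ((m1 + m2) * k) / 2) * L1k_gadget XOR d 1 1 n k"
    by (rule mult_right_mono) (rule L1k_gadget_nonneg)
qed

end
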